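(* Let $\mathcal C$ be a pointed category with finite coproducts and $E\in\mathcal C$ such that every object of $\mathcal C$ is isomorphic to a finite coproduct $E^{\vee k}$ of copies of $E$. Let $F,G\colon\mathcal C\to Ab$ be reduced functors which are polynomial of degree $\le n$, and let $\phi\colon F\to G$ be a natural transformation. Then the following are equivalent: (1) $\phi$ is a natural isomorphism; (2) $\phi_{E^{\vee k}}$ is an isomorphism for all $k\le n$; (3) $\phi_{E^{\vee n}}$ is an isomorphism; (4) $cr_k(\phi)_{E,\dots,E}$ is an isomorphism for all $1\le k\le n$.
   Context: - For a functor $F\colon\mathcal C\to Ab$: $cr_1F(X)=\ker(F(X)\to F(0))$ and $cr_2F(X,Y)=\ker\big((F(r_1),F(r_2))\colon F(X\vee Y)\to F(X)\oplus F(Y)\big)$, where $r_k$ are the coproduct retractions. - For $n\ge3$, $cr_nF(X_1,\dots,X_n)=cr_2\big(cr_{n-1}F(-,X_3,\dots,X_n)\big)(X_1,X_2)$. - $F$ is polynomial of degree $\le n$ if $cr_{n+1}F=0$. - $F$ is reduced if $F(0)=0$. - $cr_k(\phi)$ denotes the induced natural transformation $cr_kF\to cr_kG$. *)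

theory Defs
  imports "HOL-Algebra.Algebra"
begin

record ('o, 'm) pcat =
  cOb  :: "'o set"
  cAr  :: "'m set"
  cDom :: "'m \<Rightarrow> 'o"
  cCod :: "'m \<Rightarrow> 'o"
  cCmp :: "'m \<Rightarrow> 'm \<Rightarrow> 'm"   (* cCmp g f = g \<circ> f *)
  cId :: "'o \<Rightarrow> 'm"
  cZero :: "'o"
  cCop :: "'o \<Rightarrow> 'o \<Rightarrow> 'o"
  cIn1 :: "'o \<Rightarrow> 'o \<Rightarrow> 'm"
  cIn2 :: "'o \<Rightarrow> 'o \<Rightarrow> 'm"

definition HomC :: "('o,'m) pcat \<Rightarrow> 'o \<Rightarrow> 'o \<Rightarrow> 'm set" where
  "HomC C P Y = {f \<in> cAr C. cDom C f = P \<and> cCod C f = Y}"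

definition category :: "('o,'m) pcat \<Rightarrow> bool" where
  "category C \<longleftrightarrow>
     (\<forall>f\<in>cAr C. cDom C f \<in> cOb C \<and> cCod C f \<in> cOb C) \<and>
     (\<forall>P\<in>cOb C. cId C P \<in> HomC C P P) \<and>
     (\<forall>f\<in>cAr C. \<forall>g\<in>cAr C. cCod C f = cDom C g \<longrightarrow> cCmp C g f \<in> HomC C (cDom C f) (cCod C g)) \<and>
     (\<forall>f\<in>cAr C. cCmp C f (cId C (cDom C f)) = f \<and> cCmp C (cId C (cCod C f)) f = f) \<and>
     (\<forall>f\<in>cAr C. \<forall>g\<in>cAr C. \<forall>h\<in>cAr C. cCod C f = cDom C g \<longrightarrow> cCod C g = cDom C h \<longrightarrow>
         cCmp C h (cCmp C g f) = cCmp C (cCmp C h g) f)"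

text \<open>A pointed category with finite coproducts: a zero object (initial and terminal)
  together with binary coproducts (finite coproducts = initial object + binary coproducts).\<close>
definition pointed_cat_fin_coprod :: "('o,'m) pcat \<Rightarrow> bool" where
  "pointed_cat_fin_coprod C \<longleftrightarrow> category C \<and>
     cZero C \<in> cOb C \<and>
     (\<forall>P\<in>cOb C. (\<exists>!u. u \<in> HomC C (cZero C) P) \<and> (\<exists>!u. u \<in> HomC C P (cZero C))) \<and>
     (\<forall>P\<in>cOb C. \<forall>Y\<in>cOb C. cCop C P Y \<in> cOb C \<and>
        cIn1 C P Y \<in> HomC C P (cCop C P Y) \<and> cIn2 C P Y \<in> HomC C Y (cCop C P Y) \<and>
        (\<forall>Z\<in>cOb C. \<forall>h\<in>HomC C P Z. \<forall>k\<in>HomC C Y Z.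
           \<exists>!u. u \<in> HomC C (cCop C P Y) Z \<and> cCmp C u (cIn1 C P Y) = h \<and> cCmp C u (cIn2 C P Y) = k))"

definition toZ :: "('o,'m) pcat \<Rightarrow> 'o \<Rightarrow> 'm" where
  "toZ C P = (THE u. u \<in> HomC C P (cZero C))"

definition fromZ :: "('o,'m) pcat \<Rightarrow> 'o \<Rightarrow> 'm" where
  "fromZ C P = (THE u. u \<in> HomC C (cZero C) P)"

definition zmor :: "('o,'m) pcat \<Rightarrow> 'o \<Rightarrow> 'o \<Rightarrow> 'm" where
  "zmor C P Y = cCmp C (fromZ C Y) (toZ C P)"

definition copair :: "('o,'m) pcat \<Rightarrow> 'o \<Rightarrow> 'o \<Rightarrow> 'm \<Rightarrow> 'm \<Rightarrow> 'm" where
  "copair C P Y h k = (THE u. u \<in> HomC C (cCop C P Y) (cCod C h) \<and>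
       cCmp C u (cIn1 C P Y) = h \<and> cCmp C u (cIn2 C P Y) = k)"

definition retr1 :: "('o,'m) pcat \<Rightarrow> 'o \<Rightarrow> 'o \<Rightarrow> 'm" where
  "retr1 C P Y = copair C P Y (cId C P) (zmor C Y P)"

definition retr2 :: "('o,'m) pcat \<Rightarrow> 'o \<Rightarrow> 'o \<Rightarrow> 'm" where
  "retr2 C P Y = copair C P Y (zmor C P Y) (cId C Y)"

definition copmor :: "('o,'m) pcat \<Rightarrow> 'm \<Rightarrow> 'm \<Rightarrow> 'm" where
  "copmor C f g = copair C (cDom C f) (cDom C g)
      (cCmp C (cIn1 C (cCod C f) (cCod C g)) f) (cCmp C (cIn2 C (cCod C f) (cCod C g)) g)"

primrec copow :: "('o,'m) pcat \<Rightarrow> 'o \<Rightarrow> nat \<Rightarrow> 'o" where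
  "copow C E 0 = cZero C"
| "copow C E (Suc k) = cCop C (copow C E k) E"

definition is_iso_obj :: "('o,'m) pcat \<Rightarrow> 'o \<Rightarrow> 'o \<Rightarrow> bool" where
  "is_iso_obj C P Y \<longleftrightarrow> (\<exists>f g. f \<in> HomC C P Y \<and> g \<in> HomC C Y P \<and>
       cCmp C g f = cId C P \<and> cCmp C f g = cId C Y)"

definition ab_functor :: "('o,'m) pcat \<Rightarrow> ('o \<Rightarrow> 'g monoid) \<Rightarrow> ('m \<Rightarrow> 'g \<Rightarrow> 'g) \<Rightarrow> bool" where
  "ab_functor C Fo Fm \<longleftrightarrow>
     (\<forall>P\<in>cOb C. comm_group (Fo P)) \<and>
     (\<forall>f\<in>cAr C. Fm f \<in> hom (Fo (cDom C f)) (Fo (cCod C f))) \<and>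
     (\<forall>P\<in>cOb C. \<forall>x\<in>carrier (Fo P). Fm (cId C P) x = x) \<and>
     (\<forall>f\<in>cAr C. \<forall>g\<in>cAr C. cCod C f = cDom C g \<longrightarrow>
        (\<forall>x\<in>carrier (Fo (cDom C f)). Fm (cCmp C g f) x = Fm g (Fm f x)))"

definition reduced :: "('o,'m) pcat \<Rightarrow> ('o \<Rightarrow> 'g monoid) \<Rightarrow> bool" where
  "reduced C Fo \<longleftrightarrow> carrier (Fo (cZero C)) = {\<one>\<^bsub>Fo (cZero C)\<^esub>}"

definition nat_trans :: "('o,'m) pcat \<Rightarrow> ('o \<Rightarrow> 'g monoid) \<Rightarrow> ('m \<Rightarrow> 'g \<Rightarrow> 'g)
     \<Rightarrow> ('o \<Rightarrow> 'h monoid) \<Rightarrow> ('m \<Rightarrow> 'h \<Rightarrow> 'h) \<Rightarrow> ('o \<Rightarrow> 'g \<Rightarrow> 'h) \<Rightarrow> bool" where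
  "nat_trans C Fo Fm Go Gm phi \<longleftrightarrow>
     (\<forall>P\<in>cOb C. phi P \<in> hom (Fo P) (Go P)) \<and>
     (\<forall>f\<in>cAr C. \<forall>x\<in>carrier (Fo (cDom C f)). phi (cCod C f) (Fm f x) = Gm f (phi (cDom C f) x))"

text \<open>A functor of several variables is represented by an object part on lists of objects
  and a morphism part on lists of morphisms.\<close>
type_synonym ('o,'m,'g) mfun = "('o list \<Rightarrow> 'g monoid) \<times> ('m list \<Rightarrow> 'g \<Rightarrow> 'g)"

definition lift1 :: "('o \<Rightarrow> 'g monoid) \<Rightarrow> ('m \<Rightarrow> 'g \<Rightarrow> 'g) \<Rightarrow> ('o,'m,'g) mfun" where
  "lift1 Fo Fm = ((\<lambda>Ps. Fo (hd Ps)), (\<lambda>fs. Fm (hd fs)))"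

definition cr1 :: "('o,'m) pcat \<Rightarrow> ('o \<Rightarrow> 'g monoid) \<Rightarrow> ('m \<Rightarrow> 'g \<Rightarrow> 'g) \<Rightarrow> ('o,'m,'g) mfun" where
  "cr1 C Fo Fm = ((\<lambda>Ps. (Fo (hd Ps))\<lparr>carrier :=
        {x \<in> carrier (Fo (hd Ps)). Fm (toZ C (hd Ps)) x = \<one>\<^bsub>Fo (cZero C)\<^esub>}\<rparr>),
      (\<lambda>fs. Fm (hd fs)))"

text \<open>cr_2 in the first two variables of a multi-variable functor H:
  cr_2 H(X_1,X_2,Ys) = ker(H(X_1 \<or> X_2,Ys) \<rightarrow> H(X_1,Ys) \<oplus> H(X_2,Ys)), maps H(r_i, id, ..., id).\<close>
definition cr2first :: "('o,'m) pcat \<Rightarrow> ('o,'m,'g) mfun \<Rightarrow> ('o,'m,'g) mfun" where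
  "cr2first C H = (
     (\<lambda>Ps. case Ps of
        P1 # P2 # Ys \<Rightarrow> (fst H (cCop C P1 P2 # Ys))\<lparr>carrier :=
            {x \<in> carrier (fst H (cCop C P1 P2 # Ys)).
               snd H (retr1 C P1 P2 # map (cId C) Ys) x = \<one>\<^bsub>fst H (P1 # Ys)\<^esub> \<and>
               snd H (retr2 C P1 P2 # map (cId C) Ys) x = \<one>\<^bsub>fst H (P2 # Ys)\<^esub>}\<rparr>
      | _ \<Rightarrow> fst H Ps),
     (\<lambda>fs. case fs of
        f1 # f2 # gs \<Rightarrow> snd H (copmor C f1 f2 # gs)
      | _ \<Rightarrow> snd H fs))"

text \<open>cr_n F as an n-variable functor (n \<ge> 1); cr_n = cr_2(cr_{n-1}(-,X_3,...,X_n)) for n \<ge> 3.\<close>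
fun cr :: "('o,'m) pcat \<Rightarrow> ('o \<Rightarrow> 'g monoid) \<Rightarrow> ('m \<Rightarrow> 'g \<Rightarrow> 'g) \<Rightarrow> nat \<Rightarrow> ('o,'m,'g) mfun" where
  "cr C Fo Fm 0 = lift1 Fo Fm"
| "cr C Fo Fm (Suc 0) = cr1 C Fo Fm"
| "cr C Fo Fm (Suc (Suc 0)) = cr2first C (lift1 Fo Fm)"
| "cr C Fo Fm (Suc (Suc (Suc n))) = cr2first C (cr C Fo Fm (Suc (Suc n)))"

text \<open>The object of C in whose F-value cr_n F(X_1,...,X_n) sits as a subgroup:
  ((X_1 \<or> X_2) \<or> X_3) \<or> ... \<or> X_n.\<close>
definition amb :: "('o,'m) pcat \<Rightarrow> 'o list \<Rightarrow> 'o" where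
  "amb C Ps = foldl (cCop C) (hd Ps) (tl Ps)"

definition polynomial_deg_le :: "('o,'m) pcat \<Rightarrow> ('o \<Rightarrow> 'g monoid) \<Rightarrow> ('m \<Rightarrow> 'g \<Rightarrow> 'g) \<Rightarrow> nat \<Rightarrow> bool" where
  "polynomial_deg_le C Fo Fm n \<longleftrightarrow>
     (\<forall>Ps. length Ps = Suc n \<and> set Ps \<subseteq> cOb C \<longrightarrow>
        carrier (fst (cr C Fo Fm (Suc n)) Ps) = {\<one>\<^bsub>fst (cr C Fo Fm (Suc n)) Ps\<^esub>})"

text \<open>cr_k(\<phi>)_{Ps} : cr_k F(Ps) \<rightarrow> cr_k G(Ps) is the restriction of \<phi> at the ambient object;
  it is an isomorphism of abelian groups.\<close>
definition cr_nat_iso :: "('o,'m) pcat \<Rightarrow> ('o \<Rightarrow> 'g monoid) \<Rightarrow> ('m \<Rightarrow> 'g \<Rightarrow> 'g)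
     \<Rightarrow> ('o \<Rightarrow> 'h monoid) \<Rightarrow> ('m \<Rightarrow> 'h \<Rightarrow> 'h) \<Rightarrow> ('o \<Rightarrow> 'g \<Rightarrow> 'h) \<Rightarrow> nat \<Rightarrow> 'o list \<Rightarrow> bool" where
  "cr_nat_iso C Fo Fm Go Gm phi k Ps \<longleftrightarrow>
     phi (amb C Ps) \<in> iso (fst (cr C Fo Fm k) Ps) (fst (cr C Go Gm k) Ps)"

end

theory Submission
  imports Defs
begin

text \<open>
  For a reduced functor \<open>K\<close> the coproduct retractions split \<open>K(X \<or> Y)\<close> as
  \<open>K X \<oplus> K Y \<oplus> cr\<^sub>2 K(X, Y)\<close>, so a natural transformation is bijective at \<open>X \<or> Y\<close> once it is
  bijective at \<open>X\<close>, at \<open>Y\<close> and on the cross effect; conversely bijectivity at \<open>X \<or> Y\<close> and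
  injectivity at \<open>X\<close> and \<open>Y\<close> give bijectivity on the cross effect. Iterating \<open>cr\<^sub>2(-, E)\<close> yields the
  functors \<open>A \<mapsto> cr\<^sub>j\<^sub>+\<^sub>1 F(A, E, \<dots>, E)\<close>. If \<open>\<phi>\<close> is an isomorphism at \<open>E\<^sup>\<or>\<^sup>k\<close> for \<open>k \<le> n\<close>, induction
  on \<open>j\<close> makes it one on \<open>cr\<^sub>j\<^sub>+\<^sub>1(E, \<dots>, E)\<close> for \<open>j < n\<close>. Conversely, from these cross effects (which
  vanish for \<open>j \<ge> n\<close>) an induction on \<open>m\<close>, simultaneous in \<open>j\<close>, makes \<open>\<phi>\<close> an isomorphism at every
  \<open>E\<^sup>\<or>\<^sup>m\<close>, hence at every object, each being a retract of some \<open>E\<^sup>\<or>\<^sup>m\<close>. Finally \<open>E\<^sup>\<or>\<^sup>k\<close> is a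
  retract of \<open>E\<^sup>\<or>\<^sup>n\<close> for \<open>k \<le> n\<close>.
\<close>

lemma comm_group_joint_kernel:
  assumes G: "comm_group G" and "group H1" "group H2" "h1 \<in> hom G H1" "h2 \<in> hom G H2"
  shows "comm_group (G\<lparr>carrier := {x \<in> carrier G. h1 x = \<one>\<^bsub>H1\<^esub> \<and> h2 x = \<one>\<^bsub>H2\<^esub>}\<rparr>)"
proof -
  interpret comm_group G by fact
  interpret h1: group_hom G H1 h1 using assms by (simp add: group_hom_def group_hom_axioms_def)
  interpret h2: group_hom G H2 h2 using assms by (simp add: group_hom_def group_hom_axioms_def)
  have "subgroup {x \<in> carrier G. h1 x = \<one>\<^bsub>H1\<^esub> \<and> h2 x = \<one>\<^bsub>H2\<^esub>} G"
  proof (rule subgroupI)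
    show "{x \<in> carrier G. h1 x = \<one>\<^bsub>H1\<^esub> \<and> h2 x = \<one>\<^bsub>H2\<^esub>} \<noteq> {}"
      using one_closed h1.hom_one h2.hom_one by blast
  qed auto
  then have "group (G\<lparr>carrier := {x \<in> carrier G. h1 x = \<one>\<^bsub>H1\<^esub> \<and> h2 x = \<one>\<^bsub>H2\<^esub>}\<rparr>)"
    by (rule subgroup_imp_group)
  then show ?thesis
    by (rule group.group_comm_groupI) (auto simp: m_comm)
qed

lemma iso_between_trivial_groups:
  assumes "carrier G = {\<one>\<^bsub>G\<^esub>}" "carrier H = {\<one>\<^bsub>H\<^esub>}" "h \<in> hom G H" "group G" "group H"
  shows "h \<in> iso G H"
proof -
  have "h \<one>\<^bsub>G\<^esub> = \<one>\<^bsub>H\<^esub>" using hom_one assms by blast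
  then show ?thesis using assms unfolding iso_def bij_betw_def by auto
qed

locale fin_coprod_cat =
  fixes C :: "('o,'m) pcat"
  assumes fin_coprod: "pointed_cat_fin_coprod C"
begin

lemma category: "category C"
  using fin_coprod unfolding pointed_cat_fin_coprod_def by blast

lemma Hom_obs: "f \<in> HomC C P Q \<Longrightarrow> P \<in> cOb C \<and> Q \<in> cOb C"
  using category unfolding category_def HomC_def by blast

lemma comp_Hom: "f \<in> HomC C P Q \<Longrightarrow> g \<in> HomC C Q R \<Longrightarrow> cCmp C g f \<in> HomC C P R"
proof -
  assume "f \<in> HomC C P Q" "g \<in> HomC C Q R"
  moreover have "\<forall>f\<in>cAr C. \<forall>g\<in>cAr C. cCod C f = cDom C g \<longrightarrow> cCmp C g f \<in> HomC C (cDom C f) (cCod C g)"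
    using category unfolding category_def by blast
  ultimately show ?thesis unfolding HomC_def by auto
qed

lemma id_Hom: "P \<in> cOb C \<Longrightarrow> cId C P \<in> HomC C P P"
  using category unfolding category_def by blast

lemma id_left: "f \<in> HomC C P Q \<Longrightarrow> cCmp C (cId C Q) f = f"
proof -
  assume "f \<in> HomC C P Q"
  moreover have "\<forall>f\<in>cAr C. cCmp C (cId C (cCod C f)) f = f"
    using category unfolding category_def by blast
  ultimately show ?thesis unfolding HomC_def by auto
qed

lemma id_right: "f \<in> HomC C P Q \<Longrightarrow> cCmp C f (cId C P) = f"
proof -
  assume "f \<in> HomC C P Q"
  moreover have "\<forall>f\<in>cAr C. cCmp C f (cId C (cDom C f)) = f"
    using category unfolding category_def by blast
  ultimately show ?thesis unfolding HomC_def by auto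
qed

lemma comp_assoc:
  "f \<in> HomC C P Q \<Longrightarrow> g \<in> HomC C Q R \<Longrightarrow> h \<in> HomC C R S \<Longrightarrow>
   cCmp C h (cCmp C g f) = cCmp C (cCmp C h g) f"
proof -
  assume "f \<in> HomC C P Q" "g \<in> HomC C Q R" "h \<in> HomC C R S"
  moreover have "\<forall>f\<in>cAr C. \<forall>g\<in>cAr C. \<forall>h\<in>cAr C. cCod C f = cDom C g \<longrightarrow> cCod C g = cDom C h \<longrightarrow>
         cCmp C h (cCmp C g f) = cCmp C (cCmp C h g) f"
    using category unfolding category_def by blast
  ultimately show ?thesis unfolding HomC_def by auto
qed

lemma zero_ob: "cZero C \<in> cOb C"
  using fin_coprod unfolding pointed_cat_fin_coprod_def by (elim conjE)

lemma zero_universal: "\<forall>P\<in>cOb C. (\<exists>!u. u \<in> HomC C (cZero C) P) \<and> (\<exists>!u. u \<in> HomC C P (cZero C))"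
  using fin_coprod unfolding pointed_cat_fin_coprod_def by (elim conjE)

lemma coproducts: "\<forall>P\<in>cOb C. \<forall>Y\<in>cOb C. cCop C P Y \<in> cOb C \<and>
        cIn1 C P Y \<in> HomC C P (cCop C P Y) \<and> cIn2 C P Y \<in> HomC C Y (cCop C P Y) \<and>
        (\<forall>Z\<in>cOb C. \<forall>h\<in>HomC C P Z. \<forall>k\<in>HomC C Y Z.
           \<exists>!u. u \<in> HomC C (cCop C P Y) Z \<and> cCmp C u (cIn1 C P Y) = h \<and> cCmp C u (cIn2 C P Y) = k)"
  using fin_coprod unfolding pointed_cat_fin_coprod_def by (elim conjE)

lemma zero_initial: "P \<in> cOb C \<Longrightarrow> \<exists>!u. u \<in> HomC C (cZero C) P"
  by (rule conjunct1[OF bspec[OF zero_universal]])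

lemma zero_terminal: "P \<in> cOb C \<Longrightarrow> \<exists>!u. u \<in> HomC C P (cZero C)"
  by (rule conjunct2[OF bspec[OF zero_universal]])

lemma toZ_Hom: "P \<in> cOb C \<Longrightarrow> toZ C P \<in> HomC C P (cZero C)"
  unfolding toZ_def by (rule theI'[OF zero_terminal])

lemma fromZ_Hom: "P \<in> cOb C \<Longrightarrow> fromZ C P \<in> HomC C (cZero C) P"
  unfolding fromZ_def by (rule theI'[OF zero_initial])

lemma toZ_unique: "u \<in> HomC C P (cZero C) \<Longrightarrow> u = toZ C P"
  unfolding toZ_def using Hom_obs zero_terminal by (blast intro: the1_equality[symmetric])

lemma fromZ_unique: "u \<in> HomC C (cZero C) P \<Longrightarrow> u = fromZ C P"
  unfolding fromZ_def using Hom_obs zero_initial by (blast intro: the1_equality[symmetric])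

lemma coproduct:
  assumes "P \<in> cOb C" "Y \<in> cOb C"
  shows "cCop C P Y \<in> cOb C" "cIn1 C P Y \<in> HomC C P (cCop C P Y)" "cIn2 C P Y \<in> HomC C Y (cCop C P Y)"
    and "\<And>Z h k. h \<in> HomC C P Z \<Longrightarrow> k \<in> HomC C Y Z \<Longrightarrow>
       \<exists>!u. u \<in> HomC C (cCop C P Y) Z \<and> cCmp C u (cIn1 C P Y) = h \<and> cCmp C u (cIn2 C P Y) = k"
proof -
  note cop = bspec[OF bspec[OF coproducts assms(1)] assms(2)]
  show "cCop C P Y \<in> cOb C" "cIn1 C P Y \<in> HomC C P (cCop C P Y)" "cIn2 C P Y \<in> HomC C Y (cCop C P Y)"
    using cop by simp_all
  fix Z h k assume h: "h \<in> HomC C P Z" and k: "k \<in> HomC C Y Z"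
  have "Z \<in> cOb C" using Hom_obs[OF h] by blast
  with cop h k show "\<exists>!u. u \<in> HomC C (cCop C P Y) Z \<and> cCmp C u (cIn1 C P Y) = h \<and> cCmp C u (cIn2 C P Y) = k"
    by simp
qed

lemmas cop_ob = coproduct(1) and in1_Hom = coproduct(2) and in2_Hom = coproduct(3)

lemma copair:
  assumes h: "h \<in> HomC C P Z" and k: "k \<in> HomC C Y Z"
  shows "copair C P Y h k \<in> HomC C (cCop C P Y) Z"
    "cCmp C (copair C P Y h k) (cIn1 C P Y) = h" "cCmp C (copair C P Y h k) (cIn2 C P Y) = k"
proof -
  have "cCod C h = Z" using h by (simp add: HomC_def)
  then show "copair C P Y h k \<in> HomC C (cCop C P Y) Z"
    "cCmp C (copair C P Y h k) (cIn1 C P Y) = h" "cCmp C (copair C P Y h k) (cIn2 C P Y) = k"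
    using theI'[OF coproduct(4)[OF _ _ h k]] Hom_obs[OF h] Hom_obs[OF k] unfolding copair_def by auto
qed

lemma copair_ext:
  assumes "P \<in> cOb C" "Y \<in> cOb C" "u \<in> HomC C (cCop C P Y) Z" "v \<in> HomC C (cCop C P Y) Z"
    "cCmp C u (cIn1 C P Y) = cCmp C v (cIn1 C P Y)" "cCmp C u (cIn2 C P Y) = cCmp C v (cIn2 C P Y)"
  shows "u = v"
proof -
  have "cCmp C u (cIn1 C P Y) \<in> HomC C P Z" "cCmp C u (cIn2 C P Y) \<in> HomC C Y Z"
    using assms comp_Hom in1_Hom in2_Hom by blast+
  from coproduct(4)[OF assms(1,2) this] show ?thesis using assms by metis
qed

lemma zmor_Hom: "P \<in> cOb C \<Longrightarrow> Y \<in> cOb C \<Longrightarrow> zmor C P Y \<in> HomC C P Y"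
  unfolding zmor_def by (rule comp_Hom[OF toZ_Hom fromZ_Hom])

lemma comp_zmor: assumes f: "f \<in> HomC C Q R" and P: "P \<in> cOb C"
  shows "cCmp C f (zmor C P Q) = zmor C P R"
proof -
  have Q: "Q \<in> cOb C" using Hom_obs f by blast
  have "cCmp C f (zmor C P Q) = cCmp C (cCmp C f (fromZ C Q)) (toZ C P)"
    unfolding zmor_def by (rule comp_assoc[OF toZ_Hom[OF P] fromZ_Hom[OF Q] f])
  also have "cCmp C f (fromZ C Q) = fromZ C R"
    by (rule fromZ_unique, rule comp_Hom[OF fromZ_Hom[OF Q] f])
  finally show ?thesis unfolding zmor_def .
qed

lemma zmor_comp: assumes f: "f \<in> HomC C P Q" and R: "R \<in> cOb C"
  shows "cCmp C (zmor C Q R) f = zmor C P R"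
proof -
  have Q: "Q \<in> cOb C" using Hom_obs f by blast
  have "cCmp C (zmor C Q R) f = cCmp C (fromZ C R) (cCmp C (toZ C Q) f)"
    unfolding zmor_def by (rule comp_assoc[OF f toZ_Hom[OF Q] fromZ_Hom[OF R], symmetric])
  also have "cCmp C (toZ C Q) f = toZ C P"
    by (rule toZ_unique, rule comp_Hom[OF f toZ_Hom[OF Q]])
  finally show ?thesis unfolding zmor_def .
qed

lemma retr1:
  assumes "P \<in> cOb C" "Y \<in> cOb C"
  shows "retr1 C P Y \<in> HomC C (cCop C P Y) P" "cCmp C (retr1 C P Y) (cIn1 C P Y) = cId C P"
    "cCmp C (retr1 C P Y) (cIn2 C P Y) = zmor C Y P"
  using copair[OF id_Hom[OF assms(1)] zmor_Hom[OF assms(2,1)]] unfolding retr1_def by auto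

lemma retr2:
  assumes "P \<in> cOb C" "Y \<in> cOb C"
  shows "retr2 C P Y \<in> HomC C (cCop C P Y) Y" "cCmp C (retr2 C P Y) (cIn1 C P Y) = zmor C P Y"
    "cCmp C (retr2 C P Y) (cIn2 C P Y) = cId C Y"
  using copair[OF zmor_Hom[OF assms] id_Hom[OF assms(2)]] unfolding retr2_def by auto

lemma copmor:
  assumes f: "f \<in> HomC C A A'" and g: "g \<in> HomC C B B'"
  shows "copmor C f g \<in> HomC C (cCop C A B) (cCop C A' B')"
    "cCmp C (copmor C f g) (cIn1 C A B) = cCmp C (cIn1 C A' B') f"
    "cCmp C (copmor C f g) (cIn2 C A B) = cCmp C (cIn2 C A' B') g"
proof -
  have o: "A' \<in> cOb C" "B' \<in> cOb C" using Hom_obs f g by blast+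
  have d: "cDom C f = A" "cCod C f = A'" "cDom C g = B" "cCod C g = B'"
    using f g by (simp_all add: HomC_def)
  show "copmor C f g \<in> HomC C (cCop C A B) (cCop C A' B')"
    "cCmp C (copmor C f g) (cIn1 C A B) = cCmp C (cIn1 C A' B') f"
    "cCmp C (copmor C f g) (cIn2 C A B) = cCmp C (cIn2 C A' B') g"
    using copair[OF comp_Hom[OF f in1_Hom[OF o]] comp_Hom[OF g in2_Hom[OF o]]]
    unfolding copmor_def d by auto
qed

lemma copmor_comp:
  assumes f: "f \<in> HomC C A A'" and f': "f' \<in> HomC C A' A''"
    and g: "g \<in> HomC C B B'" and g': "g' \<in> HomC C B' B''"
  shows "copmor C (cCmp C f' f) (cCmp C g' g) = cCmp C (copmor C f' g') (copmor C f g)"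
proof -
  have o: "A \<in> cOb C" "B \<in> cOb C" "A' \<in> cOb C" "B' \<in> cOb C" "A'' \<in> cOb C" "B'' \<in> cOb C"
    using Hom_obs f g f' g' by blast+
  note m = copmor[OF f g] and m' = copmor[OF f' g'] and mm = copmor[OF comp_Hom[OF f f'] comp_Hom[OF g g']]
  show ?thesis
  proof (rule copair_ext[OF o(1,2) mm(1) comp_Hom[OF m(1) m'(1)]])
    have "cCmp C (cCmp C (copmor C f' g') (copmor C f g)) (cIn1 C A B)
        = cCmp C (cCmp C (copmor C f' g') (cIn1 C A' B')) f"
      using comp_assoc[OF in1_Hom[OF o(1,2)] m(1) m'(1)] comp_assoc[OF f in1_Hom[OF o(3,4)] m'(1)] m(2)
      by simp
    also have "\<dots> = cCmp C (cIn1 C A'' B'') (cCmp C f' f)"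
      using m'(2) comp_assoc[OF f f' in1_Hom[OF o(5,6)]] by simp
    finally show "cCmp C (copmor C (cCmp C f' f) (cCmp C g' g)) (cIn1 C A B) =
      cCmp C (cCmp C (copmor C f' g') (copmor C f g)) (cIn1 C A B)" using mm(2) by simp
  next
    have "cCmp C (cCmp C (copmor C f' g') (copmor C f g)) (cIn2 C A B)
        = cCmp C (cCmp C (copmor C f' g') (cIn2 C A' B')) g"
      using comp_assoc[OF in2_Hom[OF o(1,2)] m(1) m'(1)] comp_assoc[OF g in2_Hom[OF o(3,4)] m'(1)] m(3)
      by simp
    also have "\<dots> = cCmp C (cIn2 C A'' B'') (cCmp C g' g)"
      using m'(3) comp_assoc[OF g g' in2_Hom[OF o(5,6)]] by simp
    finally show "cCmp C (copmor C (cCmp C f' f) (cCmp C g' g)) (cIn2 C A B) =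
      cCmp C (cCmp C (copmor C f' g') (copmor C f g)) (cIn2 C A B)" using mm(3) by simp
  qed
qed

lemma copmor_id:
  assumes "A \<in> cOb C" "B \<in> cOb C"
  shows "copmor C (cId C A) (cId C B) = cId C (cCop C A B)"
proof -
  note m = copmor[OF id_Hom[OF assms(1)] id_Hom[OF assms(2)]]
  show ?thesis
    using m id_left id_right in1_Hom[OF assms] in2_Hom[OF assms]
    by (intro copair_ext[OF assms m(1) id_Hom[OF cop_ob[OF assms]]]) metis+
qed

lemma retr1_copmor:
  assumes f: "f \<in> HomC C A A'" and Y: "Y \<in> cOb C"
  shows "cCmp C (retr1 C A' Y) (copmor C f (cId C Y)) = cCmp C f (retr1 C A Y)"
proof -
  have o: "A \<in> cOb C" "A' \<in> cOb C" using Hom_obs f by blast+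
  note m = copmor[OF f id_Hom[OF Y]] and ra = retr1[OF o(1) Y] and rb = retr1[OF o(2) Y]
  show ?thesis
  proof (rule copair_ext[OF o(1) Y comp_Hom[OF m(1) rb(1)] comp_Hom[OF ra(1) f]])
    have "cCmp C (cCmp C (retr1 C A' Y) (copmor C f (cId C Y))) (cIn1 C A Y) = f"
      using comp_assoc[OF in1_Hom[OF o(1) Y] m(1) rb(1)] m(2) comp_assoc[OF f in1_Hom[OF o(2) Y] rb(1)]
        rb(2) id_left[OF f] by simp
    also have "\<dots> = cCmp C (cCmp C f (retr1 C A Y)) (cIn1 C A Y)"
      using comp_assoc[OF in1_Hom[OF o(1) Y] ra(1) f] ra(2) id_right[OF f] by simp
    finally show "cCmp C (cCmp C (retr1 C A' Y) (copmor C f (cId C Y))) (cIn1 C A Y) =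
      cCmp C (cCmp C f (retr1 C A Y)) (cIn1 C A Y)" .
  next
    have "cCmp C (cCmp C (retr1 C A' Y) (copmor C f (cId C Y))) (cIn2 C A Y) = zmor C Y A'"
      using comp_assoc[OF in2_Hom[OF o(1) Y] m(1) rb(1)] m(3) id_right[OF in2_Hom[OF o(2) Y]] rb(3)
      by simp
    also have "\<dots> = cCmp C (cCmp C f (retr1 C A Y)) (cIn2 C A Y)"
      using comp_assoc[OF in2_Hom[OF o(1) Y] ra(1) f] ra(3) comp_zmor[OF f Y] by simp
    finally show "cCmp C (cCmp C (retr1 C A' Y) (copmor C f (cId C Y))) (cIn2 C A Y) =
      cCmp C (cCmp C f (retr1 C A Y)) (cIn2 C A Y)" .
  qed
qed

lemma retr2_copmor:
  assumes f: "f \<in> HomC C A A'" and Y: "Y \<in> cOb C"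
  shows "cCmp C (retr2 C A' Y) (copmor C f (cId C Y)) = retr2 C A Y"
proof -
  have o: "A \<in> cOb C" "A' \<in> cOb C" using Hom_obs f by blast+
  note m = copmor[OF f id_Hom[OF Y]] and ra = retr2[OF o(1) Y] and rb = retr2[OF o(2) Y]
  show ?thesis
  proof (rule copair_ext[OF o(1) Y comp_Hom[OF m(1) rb(1)] ra(1)])
    show "cCmp C (cCmp C (retr2 C A' Y) (copmor C f (cId C Y))) (cIn1 C A Y) =
      cCmp C (retr2 C A Y) (cIn1 C A Y)"
      using comp_assoc[OF in1_Hom[OF o(1) Y] m(1) rb(1)] m(2) comp_assoc[OF f in1_Hom[OF o(2) Y] rb(1)]
        rb(2) zmor_comp[OF f Y] ra(2) by simp
  next
    show "cCmp C (cCmp C (retr2 C A' Y) (copmor C f (cId C Y))) (cIn2 C A Y) =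
      cCmp C (retr2 C A Y) (cIn2 C A Y)"
      using comp_assoc[OF in2_Hom[OF o(1) Y] m(1) rb(1)] m(3) id_right[OF in2_Hom[OF o(2) Y]]
        rb(3) ra(3) by simp
  qed
qed

lemma in2_retr2_zero:
  assumes Y: "Y \<in> cOb C"
  shows "cCmp C (cIn2 C (cZero C) Y) (retr2 C (cZero C) Y) = cId C (cCop C (cZero C) Y)"
proof -
  note Z = zero_ob and r = retr2[OF zero_ob Y]
  note i1 = in1_Hom[OF Z Y] and i2 = in2_Hom[OF Z Y] and ir = comp_Hom[OF r(1) in2_Hom[OF Z Y]]
  show ?thesis
  proof (rule copair_ext[OF Z Y ir id_Hom[OF cop_ob[OF Z Y]]])
    show "cCmp C (cCmp C (cIn2 C (cZero C) Y) (retr2 C (cZero C) Y)) (cIn1 C (cZero C) Y) =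
      cCmp C (cId C (cCop C (cZero C) Y)) (cIn1 C (cZero C) Y)"
      using fromZ_unique comp_Hom[OF i1 ir] comp_Hom[OF i1 id_Hom[OF cop_ob[OF Z Y]]] by metis
  next
    show "cCmp C (cCmp C (cIn2 C (cZero C) Y) (retr2 C (cZero C) Y)) (cIn2 C (cZero C) Y) =
      cCmp C (cId C (cCop C (cZero C) Y)) (cIn2 C (cZero C) Y)"
      using comp_assoc[OF i2 r(1) i2] r(3) id_left[OF i2] id_right[OF i2] by simp
  qed
qed

lemma functor_comm_group: "ab_functor C Ko Km \<Longrightarrow> P \<in> cOb C \<Longrightarrow> comm_group (Ko P)"
  unfolding ab_functor_def by blast

lemma functor_group: "ab_functor C Ko Km \<Longrightarrow> P \<in> cOb C \<Longrightarrow> group (Ko P)"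
  using functor_comm_group comm_group_def by blast

lemma functor_hom: "ab_functor C Ko Km \<Longrightarrow> f \<in> HomC C P Q \<Longrightarrow> Km f \<in> hom (Ko P) (Ko Q)"
  unfolding ab_functor_def HomC_def by blast

lemma functor_id: "ab_functor C Ko Km \<Longrightarrow> P \<in> cOb C \<Longrightarrow> x \<in> carrier (Ko P) \<Longrightarrow> Km (cId C P) x = x"
  unfolding ab_functor_def by blast

lemma functor_comp:
  assumes "ab_functor C Ko Km" "f \<in> HomC C P Q" "g \<in> HomC C Q R" "x \<in> carrier (Ko P)"
  shows "Km (cCmp C g f) x = Km g (Km f x)"
proof -
  have "\<forall>f\<in>cAr C. \<forall>g\<in>cAr C. cCod C f = cDom C g \<longrightarrow>
        (\<forall>x\<in>carrier (Ko (cDom C f)). Km (cCmp C g f) x = Km g (Km f x))"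
    using assms(1) unfolding ab_functor_def by blast
  then show ?thesis using assms(2-4) unfolding HomC_def by auto
qed

lemma functor_closed: "ab_functor C Ko Km \<Longrightarrow> f \<in> HomC C P Q \<Longrightarrow> x \<in> carrier (Ko P) \<Longrightarrow> Km f x \<in> carrier (Ko Q)"
  using functor_hom unfolding hom_def by blast

lemma functor_group_hom: "ab_functor C Ko Km \<Longrightarrow> f \<in> HomC C P Q \<Longrightarrow> group_hom (Ko P) (Ko Q) (Km f)"
  unfolding group_hom_def group_hom_axioms_def
  using functor_hom functor_group Hom_obs by metis

lemma functor_zmor:
  assumes F: "ab_functor C Ko Km" and "reduced C Ko" "P \<in> cOb C" "Q \<in> cOb C" "x \<in> carrier (Ko P)"
  shows "Km (zmor C P Q) x = \<one>\<^bsub>Ko Q\<^esub>"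
proof -
  have "Km (toZ C P) x = \<one>\<^bsub>Ko (cZero C)\<^esub>"
    using functor_closed[OF F toZ_Hom] assms unfolding reduced_def by blast
  then show ?thesis
    unfolding zmor_def using functor_comp[OF F toZ_Hom fromZ_Hom] assms
      group_hom.hom_one[OF functor_group_hom[OF F fromZ_Hom]] by simp
qed

lemma nat_trans_hom: "nat_trans C Ko Km Lo Lm psi \<Longrightarrow> P \<in> cOb C \<Longrightarrow> psi P \<in> hom (Ko P) (Lo P)"
  unfolding nat_trans_def by blast

lemma nat_trans_closed:
  "nat_trans C Ko Km Lo Lm psi \<Longrightarrow> P \<in> cOb C \<Longrightarrow> x \<in> carrier (Ko P) \<Longrightarrow> psi P x \<in> carrier (Lo P)"
  using nat_trans_hom unfolding hom_def by blast

lemma nat_trans_natural: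
  assumes "nat_trans C Ko Km Lo Lm psi" "f \<in> HomC C P Q" "x \<in> carrier (Ko P)"
  shows "psi Q (Km f x) = Lm f (psi P x)"
proof -
  have "\<forall>f\<in>cAr C. \<forall>x\<in>carrier (Ko (cDom C f)). psi (cCod C f) (Km f x) = Lm f (psi (cDom C f) x)"
    using assms(1) unfolding nat_trans_def by (rule conjunct2)
  then show ?thesis using assms(2,3) unfolding HomC_def by auto
qed

lemma nat_trans_group_hom:
  "nat_trans C Ko Km Lo Lm psi \<Longrightarrow> ab_functor C Ko Km \<Longrightarrow> ab_functor C Lo Lm \<Longrightarrow> P \<in> cOb C \<Longrightarrow>
   group_hom (Ko P) (Lo P) (psi P)"
  unfolding group_hom_def group_hom_axioms_def using nat_trans_hom functor_group by metis

end

abbreviation iso_at :: "('o \<Rightarrow> 'g monoid) \<Rightarrow> ('o \<Rightarrow> 'h monoid) \<Rightarrow> ('o \<Rightarrow> 'g \<Rightarrow> 'h) \<Rightarrow> 'o \<Rightarrow> bool" where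
  "iso_at Ko Lo psi A \<equiv> psi A \<in> iso (Ko A) (Lo A)"

text \<open>\<open>cr2_obj C K Y A\<close> is \<open>cr\<^sub>2 K(A, Y)\<close>, as a functor of \<open>A\<close> for fixed \<open>Y\<close>.\<close>
definition cr2_obj :: "('o,'m) pcat \<Rightarrow> ('o \<Rightarrow> 'g monoid) \<Rightarrow> ('m \<Rightarrow> 'g \<Rightarrow> 'g) \<Rightarrow> 'o \<Rightarrow> 'o \<Rightarrow> 'g monoid" where
  "cr2_obj C Ko Km Y A = (Ko (cCop C A Y))\<lparr>carrier := {x \<in> carrier (Ko (cCop C A Y)).
     Km (retr1 C A Y) x = \<one>\<^bsub>Ko A\<^esub> \<and> Km (retr2 C A Y) x = \<one>\<^bsub>Ko Y\<^esub>}\<rparr>"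

definition cr2_mor :: "('o,'m) pcat \<Rightarrow> ('m \<Rightarrow> 'g \<Rightarrow> 'g) \<Rightarrow> 'o \<Rightarrow> 'm \<Rightarrow> 'g \<Rightarrow> 'g" where
  "cr2_mor C Km Y f = Km (copmor C f (cId C Y))"

lemma cr2_obj_carrier:
  "carrier (cr2_obj C Ko Km Y A) = {x \<in> carrier (Ko (cCop C A Y)).
     Km (retr1 C A Y) x = \<one>\<^bsub>Ko A\<^esub> \<and> Km (retr2 C A Y) x = \<one>\<^bsub>Ko Y\<^esub>}"
  by (simp add: cr2_obj_def)

lemma cr2_obj_one [simp]: "\<one>\<^bsub>cr2_obj C Ko Km Y A\<^esub> = \<one>\<^bsub>Ko (cCop C A Y)\<^esub>"
  by (simp add: cr2_obj_def)

lemma cr2_obj_mult [simp]: "(\<otimes>\<^bsub>cr2_obj C Ko Km Y A\<^esub>) = (\<otimes>\<^bsub>Ko (cCop C A Y)\<^esub>)"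
  by (simp add: cr2_obj_def)

context fin_coprod_cat
begin

lemma comm_group_cr2_obj:
  assumes F: "ab_functor C Ko Km" and "A \<in> cOb C" "Y \<in> cOb C"
  shows "comm_group (cr2_obj C Ko Km Y A)"
  unfolding cr2_obj_def using assms
  by (intro comm_group_joint_kernel functor_comm_group[OF F] functor_group[OF F] functor_hom[OF F]
      cop_ob retr1(1) retr2(1))

lemma ab_functor_cr2:
  assumes F: "ab_functor C Ko Km" and Y: "Y \<in> cOb C"
  shows "ab_functor C (cr2_obj C Ko Km Y) (cr2_mor C Km Y)"
  unfolding ab_functor_def
proof (intro conjI ballI impI)
  fix P assume "P \<in> cOb C"
  then show "comm_group (cr2_obj C Ko Km Y P)" using comm_group_cr2_obj F Y by blast
next
  fix f assume "f \<in> cAr C"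
  define A A' where "A = cDom C f" and "A' = cCod C f"
  have f: "f \<in> HomC C A A'" using \<open>f \<in> cAr C\<close> by (simp add: A_def A'_def HomC_def)
  have o: "A \<in> cOb C" "A' \<in> cOb C" using Hom_obs f by blast+
  note m = copmor(1)[OF f id_Hom[OF Y]]
  have "Km (copmor C f (cId C Y)) \<in> carrier (cr2_obj C Ko Km Y A) \<rightarrow> carrier (cr2_obj C Ko Km Y A')"
  proof
    fix x assume "x \<in> carrier (cr2_obj C Ko Km Y A)"
    then have x: "x \<in> carrier (Ko (cCop C A Y))" "Km (retr1 C A Y) x = \<one>\<^bsub>Ko A\<^esub>"
      "Km (retr2 C A Y) x = \<one>\<^bsub>Ko Y\<^esub>" by (auto simp: cr2_obj_carrier)
    have "Km (retr1 C A' Y) (Km (copmor C f (cId C Y)) x) = Km f (Km (retr1 C A Y) x)"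
      using functor_comp[OF F m retr1(1)[OF o(2) Y] x(1)] retr1_copmor[OF f Y]
        functor_comp[OF F retr1(1)[OF o(1) Y] f x(1)] by simp
    also have "\<dots> = \<one>\<^bsub>Ko A'\<^esub>" using x(2) group_hom.hom_one[OF functor_group_hom[OF F f]] by simp
    finally have "Km (retr1 C A' Y) (Km (copmor C f (cId C Y)) x) = \<one>\<^bsub>Ko A'\<^esub>" .
    moreover have "Km (retr2 C A' Y) (Km (copmor C f (cId C Y)) x) = \<one>\<^bsub>Ko Y\<^esub>"
      using functor_comp[OF F m retr2(1)[OF o(2) Y] x(1)] retr2_copmor[OF f Y] x(3) by simp
    ultimately show "Km (copmor C f (cId C Y)) x \<in> carrier (cr2_obj C Ko Km Y A')"
      using functor_closed[OF F m x(1)] by (simp add: cr2_obj_carrier)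
  qed
  then show "cr2_mor C Km Y f \<in> hom (cr2_obj C Ko Km Y (cDom C f)) (cr2_obj C Ko Km Y (cCod C f))"
    using hom_mult[OF functor_hom[OF F m]]
    unfolding A_def[symmetric] A'_def[symmetric] hom_def cr2_mor_def by (auto simp: cr2_obj_carrier)
next
  fix P x assume "P \<in> cOb C" "x \<in> carrier (cr2_obj C Ko Km Y P)"
  then show "cr2_mor C Km Y (cId C P) x = x"
    unfolding cr2_mor_def using copmor_id functor_id[OF F cop_ob] Y by (simp add: cr2_obj_carrier)
next
  fix f g assume "f \<in> cAr C" "g \<in> cAr C" "cCod C f = cDom C g"
  then have f: "f \<in> HomC C (cDom C f) (cCod C f)" and g: "g \<in> HomC C (cCod C f) (cCod C g)"
    by (auto simp: HomC_def)
  fix x assume "x \<in> carrier (cr2_obj C Ko Km Y (cDom C f))"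
  moreover have "copmor C (cCmp C g f) (cId C Y) = cCmp C (copmor C g (cId C Y)) (copmor C f (cId C Y))"
    using copmor_comp[OF f g id_Hom[OF Y] id_Hom[OF Y]] id_left[OF id_Hom[OF Y]] by simp
  ultimately show "cr2_mor C Km Y (cCmp C g f) x = cr2_mor C Km Y g (cr2_mor C Km Y f x)"
    unfolding cr2_mor_def
    using functor_comp[OF F copmor(1)[OF f id_Hom[OF Y]] copmor(1)[OF g id_Hom[OF Y]]]
    by (simp add: cr2_obj_carrier)
qed

text \<open>An element of \<open>cr\<^sub>2 K(0, Y)\<close> is killed by \<open>r\<^sub>2\<close>, which is inverse to \<open>in\<^sub>2 : Y \<rightarrow> 0 \<or> Y\<close>.\<close>
lemma reduced_cr2:
  assumes F: "ab_functor C Ko Km" and Y: "Y \<in> cOb C"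
  shows "reduced C (cr2_obj C Ko Km Y)"
proof -
  let ?Z = "cZero C"
  have trivial: "x = \<one>\<^bsub>Ko (cCop C ?Z Y)\<^esub>" if "x \<in> carrier (cr2_obj C Ko Km Y ?Z)" for x
  proof -
    have x: "x \<in> carrier (Ko (cCop C ?Z Y))" "Km (retr2 C ?Z Y) x = \<one>\<^bsub>Ko Y\<^esub>"
      using that by (auto simp: cr2_obj_carrier)
    have "x = Km (cIn2 C ?Z Y) (Km (retr2 C ?Z Y) x)"
      using in2_retr2_zero[OF Y] functor_comp[OF F retr2(1)[OF zero_ob Y] in2_Hom[OF zero_ob Y] x(1)]
        functor_id[OF F cop_ob[OF zero_ob Y] x(1)] by simp
    then show ?thesis
      using x(2) group_hom.hom_one[OF functor_group_hom[OF F in2_Hom[OF zero_ob Y]]] by simp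
  qed
  have "group (cr2_obj C Ko Km Y ?Z)"
    using comm_group_cr2_obj[OF F zero_ob Y] comm_group_def by blast
  then have "\<one>\<^bsub>cr2_obj C Ko Km Y ?Z\<^esub> \<in> carrier (cr2_obj C Ko Km Y ?Z)"
    by (rule monoid.one_closed[OF group.is_monoid])
  with trivial show ?thesis unfolding reduced_def cr2_obj_one by blast
qed

lemma nat_trans_cr2:
  assumes F: "ab_functor C Ko Km" and L: "ab_functor C Lo Lm" and Y: "Y \<in> cOb C"
    and psi: "nat_trans C Ko Km Lo Lm psi"
  shows "nat_trans C (cr2_obj C Ko Km Y) (cr2_mor C Km Y) (cr2_obj C Lo Lm Y) (cr2_mor C Lm Y)
           (\<lambda>A. psi (cCop C A Y))"
  unfolding nat_trans_def
proof (intro conjI ballI)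
  fix A assume A: "A \<in> cOb C"
  note c = cop_ob[OF A Y]
  have "psi (cCop C A Y) \<in> carrier (cr2_obj C Ko Km Y A) \<rightarrow> carrier (cr2_obj C Lo Lm Y A)"
  proof
    fix x assume "x \<in> carrier (cr2_obj C Ko Km Y A)"
    then have x: "x \<in> carrier (Ko (cCop C A Y))" "Km (retr1 C A Y) x = \<one>\<^bsub>Ko A\<^esub>"
      "Km (retr2 C A Y) x = \<one>\<^bsub>Ko Y\<^esub>" by (auto simp: cr2_obj_carrier)
    then show "psi (cCop C A Y) x \<in> carrier (cr2_obj C Lo Lm Y A)"
      using nat_trans_natural[OF psi retr1(1)[OF A Y] x(1)] nat_trans_natural[OF psi retr2(1)[OF A Y] x(1)]
        group_hom.hom_one[OF nat_trans_group_hom[OF psi F L A]]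
        group_hom.hom_one[OF nat_trans_group_hom[OF psi F L Y]] nat_trans_closed[OF psi c x(1)]
      by (simp add: cr2_obj_carrier)
  qed
  then show "psi (cCop C A Y) \<in> hom (cr2_obj C Ko Km Y A) (cr2_obj C Lo Lm Y A)"
    using hom_mult[OF nat_trans_hom[OF psi c]] unfolding hom_def by (auto simp: cr2_obj_carrier)
next
  fix f x assume "f \<in> cAr C" "x \<in> carrier (cr2_obj C Ko Km Y (cDom C f))"
  then show "psi (cCop C (cCod C f) Y) (cr2_mor C Km Y f x) = cr2_mor C Lm Y f (psi (cCop C (cDom C f) Y) x)"
    unfolding cr2_mor_def using nat_trans_natural[OF psi copmor(1)[OF _ id_Hom[OF Y]]]
    by (simp add: cr2_obj_carrier HomC_def)
qed

lemma iso_of_retract: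
  assumes F: "ab_functor C Ko Km" and L: "ab_functor C Lo Lm" and psi: "nat_trans C Ko Km Lo Lm psi"
    and s: "s \<in> HomC C A P" and r: "r \<in> HomC C P A" and rs: "cCmp C r s = cId C A"
    and iso_P: "iso_at Ko Lo psi P"
  shows "iso_at Ko Lo psi A"
proof -
  have A: "A \<in> cOb C" using Hom_obs s by blast
  have retract: "Hm r (Hm s x) = x" if "ab_functor C Ho Hm" "x \<in> carrier (Ho A)" for Ho Hm x
    using functor_comp[OF that(1) s r that(2)] rs functor_id[OF that(1) A that(2)] by simp
  have "inj_on (psi A) (carrier (Ko A))"
  proof (rule inj_onI)
    fix x x' assume x: "x \<in> carrier (Ko A)" "x' \<in> carrier (Ko A)" "psi A x = psi A x'"
    then have "psi P (Km s x) = psi P (Km s x')" using nat_trans_natural[OF psi s] by simp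
    then have "Km s x = Km s x'"
      using iso_iff[THEN iffD1, OF iso_P] functor_closed[OF F s] x by (meson inj_onD)
    then show "x = x'" using retract[OF F] x by metis
  qed
  moreover have "carrier (Lo A) \<subseteq> psi A ` carrier (Ko A)"
  proof
    fix y assume y: "y \<in> carrier (Lo A)"
    obtain z where z: "z \<in> carrier (Ko P)" "psi P z = Lm s y"
      using iso_iff[THEN iffD1, OF iso_P] functor_closed[OF L s y] by (metis imageE)
    have "psi A (Km r z) = y" using nat_trans_natural[OF psi r z(1)] z(2) retract[OF L y] by simp
    then show "y \<in> psi A ` carrier (Ko A)" using functor_closed[OF F r z(1)] by force
  qed
  ultimately show ?thesis
    using nat_trans_hom[OF psi A] nat_trans_closed[OF psi A] unfolding iso_iff by blast
qed

lemma iso_cr2_of_iso: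
  assumes F: "ab_functor C Ko Km" and L: "ab_functor C Lo Lm" and psi: "nat_trans C Ko Km Lo Lm psi"
    and A: "A \<in> cOb C" and Y: "Y \<in> cOb C"
    and iso_AY: "iso_at Ko Lo psi (cCop C A Y)"
    and inj_A: "inj_on (psi A) (carrier (Ko A))" and inj_Y: "inj_on (psi Y) (carrier (Ko Y))"
  shows "psi (cCop C A Y) \<in> iso (cr2_obj C Ko Km Y A) (cr2_obj C Lo Lm Y A)"
proof -
  note h = nat_trans_hom[OF nat_trans_cr2[OF F L Y psi] A]
  note kill_one = group_hom.hom_one[OF nat_trans_group_hom[OF psi F L]]
  have "inj_on (psi (cCop C A Y)) (carrier (cr2_obj C Ko Km Y A))"
    using iso_iff[THEN iffD1, OF iso_AY] by (rule inj_on_subset[OF conjunct2[OF conjunct2]])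
      (auto simp: cr2_obj_carrier)
  moreover have "carrier (cr2_obj C Lo Lm Y A) \<subseteq> psi (cCop C A Y) ` carrier (cr2_obj C Ko Km Y A)"
  proof
    fix y assume "y \<in> carrier (cr2_obj C Lo Lm Y A)"
    then have y: "y \<in> carrier (Lo (cCop C A Y))" "Lm (retr1 C A Y) y = \<one>\<^bsub>Lo A\<^esub>"
      "Lm (retr2 C A Y) y = \<one>\<^bsub>Lo Y\<^esub>" by (auto simp: cr2_obj_carrier)
    obtain x where x: "x \<in> carrier (Ko (cCop C A Y))" "psi (cCop C A Y) x = y"
      using iso_iff[THEN iffD1, OF iso_AY] y(1) by (metis imageE)
    have "psi A (Km (retr1 C A Y) x) = psi A \<one>\<^bsub>Ko A\<^esub>"
      using nat_trans_natural[OF psi retr1(1)[OF A Y] x(1)] x(2) y(2) kill_one[OF A] by simp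
    then have "Km (retr1 C A Y) x = \<one>\<^bsub>Ko A\<^esub>"
      using inj_A functor_closed[OF F retr1(1)[OF A Y] x(1)] functor_group[OF F A]
      by (meson group.is_monoid inj_onD monoid.one_closed)
    moreover have "psi Y (Km (retr2 C A Y) x) = psi Y \<one>\<^bsub>Ko Y\<^esub>"
      using nat_trans_natural[OF psi retr2(1)[OF A Y] x(1)] x(2) y(3) kill_one[OF Y] by simp
    then have "Km (retr2 C A Y) x = \<one>\<^bsub>Ko Y\<^esub>"
      using inj_Y functor_closed[OF F retr2(1)[OF A Y] x(1)] functor_group[OF F Y]
      by (meson group.is_monoid inj_onD monoid.one_closed)
    ultimately show "y \<in> psi (cCop C A Y) ` carrier (cr2_obj C Ko Km Y A)"
      using x by (force simp: cr2_obj_carrier)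
  qed
  ultimately show ?thesis using h unfolding iso_iff hom_def by blast
qed

text \<open>For reduced \<open>K\<close>, \<open>K(A \<or> Y) = K A \<oplus> K Y \<oplus> cr\<^sub>2 K(A, Y)\<close>: an element \<open>y\<close> decomposes as
  \<open>in\<^sub>1(r\<^sub>1 y) \<cdot> in\<^sub>2(r\<^sub>2 y) \<cdot> w\<close> with \<open>w\<close> in the cross effect.\<close>
lemma iso_of_iso_cr2:
  assumes F: "ab_functor C Ko Km" and L: "ab_functor C Lo Lm" and L0: "reduced C Lo"
    and psi: "nat_trans C Ko Km Lo Lm psi" and A: "A \<in> cOb C" and Y: "Y \<in> cOb C"
    and iso_A: "iso_at Ko Lo psi A" and iso_Y: "iso_at Ko Lo psi Y"
    and iso_cr2: "psi (cCop C A Y) \<in> iso (cr2_obj C Ko Km Y A) (cr2_obj C Lo Lm Y A)"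
  shows "iso_at Ko Lo psi (cCop C A Y)"
proof -
  define c where "c = cCop C A Y"
  have c: "c \<in> cOb C" using cop_ob A Y c_def by blast
  interpret K: comm_group "Ko c" using functor_comm_group[OF F c] .
  interpret L: comm_group "Lo c" using functor_comm_group[OF L c] .
  interpret psi: group_hom "Ko c" "Lo c" "psi c" by (rule nat_trans_group_hom[OF psi F L c])
  note r1 = retr1[OF A Y, folded c_def] and r2 = retr2[OF A Y, folded c_def]
  note i1 = in1_Hom[OF A Y, folded c_def] and i2 = in2_Hom[OF A Y, folded c_def]
  note kill_one = group_hom.hom_one[OF nat_trans_group_hom[OF psi F L]]
  note Lr1 = functor_group_hom[OF L r1(1)] and Lr2 = functor_group_hom[OF L r2(1)]
  have "x = \<one>\<^bsub>Ko c\<^esub>" if x: "x \<in> carrier (Ko c)" "psi c x = \<one>\<^bsub>Lo c\<^esub>" for x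
  proof -
    have "psi A (Km (retr1 C A Y) x) = psi A \<one>\<^bsub>Ko A\<^esub>"
      using nat_trans_natural[OF psi r1(1) x(1)] x(2) group_hom.hom_one[OF Lr1] kill_one[OF A] by simp
    then have "Km (retr1 C A Y) x = \<one>\<^bsub>Ko A\<^esub>"
      using iso_iff[THEN iffD1, OF iso_A] functor_closed[OF F r1(1) x(1)] functor_group[OF F A]
      by (meson group.is_monoid inj_onD monoid.one_closed)
    moreover have "psi Y (Km (retr2 C A Y) x) = psi Y \<one>\<^bsub>Ko Y\<^esub>"
      using nat_trans_natural[OF psi r2(1) x(1)] x(2) group_hom.hom_one[OF Lr2] kill_one[OF Y] by simp
    then have "Km (retr2 C A Y) x = \<one>\<^bsub>Ko Y\<^esub>"
      using iso_iff[THEN iffD1, OF iso_Y] functor_closed[OF F r2(1) x(1)] functor_group[OF F Y]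
      by (meson group.is_monoid inj_onD monoid.one_closed)
    ultimately have "x \<in> carrier (cr2_obj C Ko Km Y A)" using x(1) by (simp add: cr2_obj_carrier c_def)
    moreover have "\<one>\<^bsub>Ko c\<^esub> \<in> carrier (cr2_obj C Ko Km Y A)"
      using group_hom.hom_one[OF functor_group_hom[OF F r1(1)]]
        group_hom.hom_one[OF functor_group_hom[OF F r2(1)]] K.one_closed
      by (simp add: cr2_obj_carrier c_def)
    moreover have "psi c x = psi c \<one>\<^bsub>Ko c\<^esub>" using x(2) psi.hom_one by simp
    ultimately show ?thesis
      using iso_iff[THEN iffD1, OF iso_cr2] unfolding c_def inj_on_def by blast
  qed
  then have inj: "inj_on (psi c) (carrier (Ko c))"
    using psi.inj_on_one_iff by blast
  have "carrier (Lo c) \<subseteq> psi c ` carrier (Ko c)"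
  proof
    fix y assume y: "y \<in> carrier (Lo c)"
    define a where "a = Lm (retr1 C A Y) y"
    define b where "b = Lm (retr2 C A Y) y"
    have ab: "a \<in> carrier (Lo A)" "b \<in> carrier (Lo Y)"
      using functor_closed[OF L r1(1) y] functor_closed[OF L r2(1) y] a_def b_def by auto
    obtain a' where a': "a' \<in> carrier (Ko A)" "psi A a' = a"
      using iso_iff[THEN iffD1, OF iso_A] ab(1) by (metis imageE)
    obtain b' where b': "b' \<in> carrier (Ko Y)" "psi Y b' = b"
      using iso_iff[THEN iffD1, OF iso_Y] ab(2) by (metis imageE)
    define u where "u = Lm (cIn1 C A Y) a \<otimes>\<^bsub>Lo c\<^esub> Lm (cIn2 C A Y) b"
    have u: "u \<in> carrier (Lo c)"
      using functor_closed[OF L i1 ab(1)] functor_closed[OF L i2 ab(2)] u_def by simp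
    define w where "w = inv\<^bsub>Lo c\<^esub> u \<otimes>\<^bsub>Lo c\<^esub> y"
    have w: "w \<in> carrier (Lo c)" using w_def u y by simp
    have "Lm (retr1 C A Y) (Lm (cIn1 C A Y) a) = a" "Lm (retr1 C A Y) (Lm (cIn2 C A Y) b) = \<one>\<^bsub>Lo A\<^esub>"
      "Lm (retr2 C A Y) (Lm (cIn1 C A Y) a) = \<one>\<^bsub>Lo Y\<^esub>" "Lm (retr2 C A Y) (Lm (cIn2 C A Y) b) = b"
      using functor_comp[OF L i1 r1(1) ab(1)] r1(2) functor_id[OF L A ab(1)]
        functor_comp[OF L i2 r1(1) ab(2)] r1(3) functor_zmor[OF L L0 Y A ab(2)]
        functor_comp[OF L i1 r2(1) ab(1)] r2(2) functor_zmor[OF L L0 A Y ab(1)]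
        functor_comp[OF L i2 r2(1) ab(2)] r2(3) functor_id[OF L Y ab(2)] by simp_all
    then have "Lm (retr1 C A Y) u = a" "Lm (retr2 C A Y) u = b"
      unfolding u_def using group_hom.hom_mult[OF Lr1] group_hom.hom_mult[OF Lr2] ab
        functor_closed[OF L i1 ab(1)] functor_closed[OF L i2 ab(2)]
        functor_group[OF L A] functor_group[OF L Y] by (simp_all add: group.is_monoid)
    then have "Lm (retr1 C A Y) w = \<one>\<^bsub>Lo A\<^esub>" "Lm (retr2 C A Y) w = \<one>\<^bsub>Lo Y\<^esub>"
      unfolding w_def using group_hom.hom_mult[OF Lr1] group_hom.hom_inv[OF Lr1]
        group_hom.hom_mult[OF Lr2] group_hom.hom_inv[OF Lr2] u y a_def b_def ab
        functor_group[OF L A] functor_group[OF L Y] by (simp_all add: group.l_inv)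
    then have "w \<in> carrier (cr2_obj C Lo Lm Y A)" using w by (simp add: cr2_obj_carrier c_def)
    then obtain w' where w': "w' \<in> carrier (cr2_obj C Ko Km Y A)" "psi c w' = w"
      using iso_iff[THEN iffD1, OF iso_cr2] unfolding c_def by (metis imageE)
    have w'_K: "w' \<in> carrier (Ko c)" using w' by (simp add: cr2_obj_carrier c_def)
    define x where "x = Km (cIn1 C A Y) a' \<otimes>\<^bsub>Ko c\<^esub> Km (cIn2 C A Y) b' \<otimes>\<^bsub>Ko c\<^esub> w'"
    have in_K: "Km (cIn1 C A Y) a' \<in> carrier (Ko c)" "Km (cIn2 C A Y) b' \<in> carrier (Ko c)"
      using functor_closed[OF F i1 a'(1)] functor_closed[OF F i2 b'(1)] by auto
    have "psi c x = u \<otimes>\<^bsub>Lo c\<^esub> w"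
      unfolding x_def u_def using in_K w'_K nat_trans_natural[OF psi i1 a'(1)] nat_trans_natural[OF psi i2 b'(1)]
        a' b' w'(2) by simp
    also have "\<dots> = y" unfolding w_def using u y by (simp add: L.m_assoc[symmetric])
    finally have "psi c x = y" .
    moreover have "x \<in> carrier (Ko c)" unfolding x_def using in_K w'_K by simp
    ultimately show "y \<in> psi c ` carrier (Ko c)" by blast
  qed
  with inj show ?thesis unfolding c_def[symmetric] iso_iff using psi.hom_closed
    nat_trans_hom[OF psi c] by blast
qed

end

text \<open>\<open>crE C E K j\<close> is the one-variable functor \<open>A \<mapsto> cr\<^sub>j\<^sub>+\<^sub>1 K(A, E, \<dots>, E)\<close>; its value at \<open>A\<close> is a
  subgroup of \<open>K (amb C (A # replicate j E))\<close>, i.e.\ of \<open>K(A \<or> E \<or> \<dots> \<or> E)\<close>.\<close>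
primrec crE :: "('o,'m) pcat \<Rightarrow> 'o \<Rightarrow> ('o \<Rightarrow> 'g monoid) \<Rightarrow> ('m \<Rightarrow> 'g \<Rightarrow> 'g) \<Rightarrow> nat
    \<Rightarrow> ('o \<Rightarrow> 'g monoid) \<times> ('m \<Rightarrow> 'g \<Rightarrow> 'g)" where
  "crE C E Ko Km 0 = (Ko, Km)"
| "crE C E Ko Km (Suc j) =
     (cr2_obj C (fst (crE C E Ko Km j)) (snd (crE C E Ko Km j)) E, cr2_mor C (snd (crE C E Ko Km j)) E)"

lemma cr_Suc_Suc_replicate:
  "(\<forall>A. fst (cr C Fo Fm (Suc (Suc j))) (A # E # replicate j E) = fst (crE C E Fo Fm (Suc j)) A) \<and>
   (\<forall>f. snd (cr C Fo Fm (Suc (Suc j))) (f # cId C E # replicate j (cId C E)) = snd (crE C E Fo Fm (Suc j)) f)"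
  by (induction j) (simp_all add: cr2first_def lift1_def cr2_obj_def cr2_mor_def)

lemma amb_Cons_Cons: "amb C (A # B # Ys) = amb C (cCop C A B # Ys)"
  by (simp add: amb_def)

lemma amb_singleton [simp]: "amb C [A] = A"
  by (simp add: amb_def)

lemma amb_replicate_Suc: "amb C (A # E # replicate i E) = cCop C (amb C (A # replicate i E)) E"
  by (induction i arbitrary: A) (simp_all add: amb_def)

context fin_coprod_cat
begin

lemma cr_replicate_eq_crE:
  assumes F: "ab_functor C Fo Fm" and F0: "reduced C Fo" and A: "A \<in> cOb C"
  shows "fst (cr C Fo Fm (Suc j)) (A # replicate j E) = fst (crE C E Fo Fm j) A"
proof (cases j)
  case 0
  have "{x \<in> carrier (Fo A). Fm (toZ C A) x = \<one>\<^bsub>Fo (cZero C)\<^esub>} = carrier (Fo A)"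
    using functor_closed[OF F toZ_Hom[OF A]] F0 unfolding reduced_def by blast
  then show ?thesis using 0 by (simp add: cr1_def)
next
  case (Suc j')
  then show ?thesis using cr_Suc_Suc_replicate[of C Fo Fm j' E] by simp
qed

lemma ab_functor_crE:
  "ab_functor C Fo Fm \<Longrightarrow> E \<in> cOb C \<Longrightarrow> ab_functor C (fst (crE C E Fo Fm j)) (snd (crE C E Fo Fm j))"
  by (induction j) (simp_all add: ab_functor_cr2)

lemma reduced_crE:
  "ab_functor C Fo Fm \<Longrightarrow> reduced C Fo \<Longrightarrow> E \<in> cOb C \<Longrightarrow> reduced C (fst (crE C E Fo Fm j))"
  by (cases j) (simp_all add: reduced_cr2 ab_functor_crE)

lemma nat_trans_crE:
  assumes F: "ab_functor C Fo Fm" and G: "ab_functor C Go Gm" and E: "E \<in> cOb C"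
    and phi: "nat_trans C Fo Fm Go Gm phi"
  shows "nat_trans C (fst (crE C E Fo Fm j)) (snd (crE C E Fo Fm j)) (fst (crE C E Go Gm j)) (snd (crE C E Go Gm j))
     (\<lambda>A. phi (amb C (A # replicate j E)))"
proof (induction j)
  case 0
  then show ?case using phi by simp
next
  case (Suc j)
  then show ?case
    using nat_trans_cr2[OF ab_functor_crE[OF F E] ab_functor_crE[OF G E] E Suc] by (simp add: amb_Cons_Cons)
qed

lemma crE_trivial_mono:
  assumes F: "ab_functor C Fo Fm" and E: "E \<in> cOb C"
    and trivial: "\<And>A. A \<in> cOb C \<Longrightarrow> carrier (fst (crE C E Fo Fm n) A) = {\<one>\<^bsub>fst (crE C E Fo Fm n) A\<^esub>}"
    and "n \<le> j" "A \<in> cOb C"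
  shows "carrier (fst (crE C E Fo Fm j) A) = {\<one>\<^bsub>fst (crE C E Fo Fm j) A\<^esub>}"
  using assms(4,5)
proof (induction j arbitrary: A)
  case 0
  then show ?case using trivial by simp
next
  case (Suc j)
  show ?case
  proof (cases "n = Suc j")
    case True
    then show ?thesis using trivial Suc.prems by blast
  next
    case False
    let ?K = "cr2_obj C (fst (crE C E Fo Fm j)) (snd (crE C E Fo Fm j)) E A"
    have "carrier ?K \<subseteq> {\<one>\<^bsub>?K\<^esub>}"
      using Suc.IH[of "cCop C A E"] False Suc.prems cop_ob[OF _ E] by (auto simp: cr2_obj_carrier)
    moreover have "group ?K"
      using comm_group_cr2_obj[OF ab_functor_crE[OF F E] Suc.prems(2) E] comm_group_def by blast
    then have "\<one>\<^bsub>?K\<^esub> \<in> carrier ?K" by (rule monoid.one_closed[OF group.is_monoid])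
    ultimately show ?thesis by auto
  qed
qed

lemma crE_trivial_of_polynomial:
  assumes "ab_functor C Fo Fm" "reduced C Fo" "polynomial_deg_le C Fo Fm n" "E \<in> cOb C" "A \<in> cOb C"
  shows "carrier (fst (crE C E Fo Fm n) A) = {\<one>\<^bsub>fst (crE C E Fo Fm n) A\<^esub>}"
proof -
  have "length (A # replicate n E) = Suc n \<and> set (A # replicate n E) \<subseteq> cOb C" using assms by auto
  then show ?thesis
    using assms(3) cr_replicate_eq_crE[OF assms(1,2,5)] unfolding polynomial_deg_le_def by metis
qed

end

locale polynomial_nat_trans = fin_coprod_cat +
  fixes E :: 'o and n :: nat
    and Fo :: "'o \<Rightarrow> 'g monoid" and Fm :: "'m \<Rightarrow> 'g \<Rightarrow> 'g"
    and Go :: "'o \<Rightarrow> 'h monoid" and Gm :: "'m \<Rightarrow> 'h \<Rightarrow> 'h"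
    and phi :: "'o \<Rightarrow> 'g \<Rightarrow> 'h"
  assumes E: "E \<in> cOb C"
    and generator: "\<forall>P\<in>cOb C. \<exists>k. is_iso_obj C P (copow C E k)"
    and F: "ab_functor C Fo Fm" and F_reduced: "reduced C Fo" and F_poly: "polynomial_deg_le C Fo Fm n"
    and G: "ab_functor C Go Gm" and G_reduced: "reduced C Go" and G_poly: "polynomial_deg_le C Go Gm n"
    and phi: "nat_trans C Fo Fm Go Gm phi"
begin

abbreviation "KF j \<equiv> fst (crE C E Fo Fm j)"
abbreviation "KG j \<equiv> fst (crE C E Go Gm j)"
abbreviation "phiE j \<equiv> \<lambda>A. phi (amb C (A # replicate j E))"

lemma ab_functor_KF: "ab_functor C (KF j) (snd (crE C E Fo Fm j))"
  and ab_functor_KG: "ab_functor C (KG j) (snd (crE C E Go Gm j))"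
  and nat_trans_phiE: "nat_trans C (KF j) (snd (crE C E Fo Fm j)) (KG j) (snd (crE C E Go Gm j)) (phiE j)"
  using ab_functor_crE[OF F E] ab_functor_crE[OF G E] nat_trans_crE[OF F G E phi] by blast+

lemma iso_at_phiE_of_trivial:
  assumes "A \<in> cOb C" "carrier (KF j A) = {\<one>\<^bsub>KF j A\<^esub>}" "carrier (KG j A) = {\<one>\<^bsub>KG j A\<^esub>}"
  shows "iso_at (KF j) (KG j) (phiE j) A"
  using assms functor_group[OF ab_functor_KF] functor_group[OF ab_functor_KG]
  by (intro iso_between_trivial_groups nat_trans_hom[OF nat_trans_phiE]) blast+

lemma copow_ob: "copow C E k \<in> cOb C"
  by (induction k) (simp_all add: zero_ob cop_ob E)

lemma amb_replicate_ob: "A \<in> cOb C \<Longrightarrow> amb C (A # replicate i E) \<in> cOb C"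
  by (induction i) (simp_all add: amb_replicate_Suc cop_ob E)

lemma amb_replicate_retract_copow:
  "\<exists>s r. s \<in> HomC C (amb C (E # replicate i E)) (copow C E (Suc i)) \<and>
     r \<in> HomC C (copow C E (Suc i)) (amb C (E # replicate i E)) \<and>
     cCmp C r s = cId C (amb C (E # replicate i E))"
proof (induction i)
  case 0
  show ?case using in2_Hom[OF zero_ob E] retr2[OF zero_ob E] by auto
next
  case (Suc i)
  let ?A = "amb C (E # replicate i E)"
  obtain s r where s: "s \<in> HomC C ?A (copow C E (Suc i))" and r: "r \<in> HomC C (copow C E (Suc i)) ?A"
    and rs: "cCmp C r s = cId C ?A" using Suc.IH by blast
  have "cCmp C (copmor C r (cId C E)) (copmor C s (cId C E)) = cId C (cCop C ?A E)"
    using copmor_comp[OF s r id_Hom[OF E] id_Hom[OF E]] rs id_left[OF id_Hom[OF E]]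
      copmor_id[OF amb_replicate_ob[OF E] E] by simp
  then show ?case
    using copmor(1)[OF s id_Hom[OF E]] copmor(1)[OF r id_Hom[OF E]] by (auto simp: amb_replicate_Suc)
qed

lemma iso_at_amb_of_copow:
  "iso_at Fo Go phi (copow C E (Suc i)) \<Longrightarrow> iso_at Fo Go phi (amb C (E # replicate i E))"
  using amb_replicate_retract_copow[of i] iso_of_retract[OF F G phi] by blast

lemma iso_at_copow_le:
  assumes "k \<le> m" "iso_at Fo Go phi (copow C E m)"
  shows "iso_at Fo Go phi (copow C E k)"
  using assms
proof (induction m)
  case (Suc m)
  then show ?case
    using iso_of_retract[OF F G phi in1_Hom[OF copow_ob E] retr1(1,2)[OF copow_ob E]] le_Suc_eq by auto
qed simp

text \<open>Induction on \<open>j\<close> for all \<open>A\<close> at once, since the step uses the hypothesis at \<open>A \<or> E\<close>, at \<open>A\<close>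
  and at \<open>E\<close>.\<close>
lemma crE_iso_of_iso:
  assumes "A \<in> cOb C"
    and "\<forall>i\<le>j. iso_at Fo Go phi (amb C (A # replicate i E))"
    and "\<forall>i<j. iso_at Fo Go phi (amb C (E # replicate i E))"
  shows "iso_at (KF j) (KG j) (phiE j) A"
  using assms
proof (induction j arbitrary: A)
  case 0
  then show ?case by simp
next
  case (Suc j)
  have "\<forall>i\<le>j. iso_at Fo Go phi (amb C (cCop C A E # replicate i E))"
  proof (intro allI impI)
    fix i assume "i \<le> j"
    then show "iso_at Fo Go phi (amb C (cCop C A E # replicate i E))"
      using Suc.prems(2)[rule_format, of "Suc i"] by (simp add: amb_Cons_Cons)
  qed
  then have "iso_at (KF j) (KG j) (phiE j) (cCop C A E)"
    using Suc.IH[of "cCop C A E"] Suc.prems(1,3) cop_ob[OF _ E] by simp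
  moreover have "iso_at (KF j) (KG j) (phiE j) A" "iso_at (KF j) (KG j) (phiE j) E"
    using Suc.IH Suc.prems E by auto
  ultimately have "phiE j (cCop C A E) \<in> iso (cr2_obj C (KF j) (snd (crE C E Fo Fm j)) E A)
     (cr2_obj C (KG j) (snd (crE C E Go Gm j)) E A)"
    using iso_cr2_of_iso[OF ab_functor_KF ab_functor_KG nat_trans_phiE Suc.prems(1) E]
    unfolding iso_iff by blast
  then show ?case by (simp add: amb_Cons_Cons)
qed

lemma cr_nat_iso_iff_crE:
  "cr_nat_iso C Fo Fm Go Gm phi (Suc j) (replicate (Suc j) E) \<longleftrightarrow> iso_at (KF j) (KG j) (phiE j) E"
  unfolding cr_nat_iso_def
  using cr_replicate_eq_crE[OF F F_reduced E, of j E] cr_replicate_eq_crE[OF G G_reduced E, of j E] by simp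

lemma cr_iso_of_iso_at_copow:
  assumes "\<forall>k\<le>n. iso_at Fo Go phi (copow C E k)" "1 \<le> k" "k \<le> n"
  shows "cr_nat_iso C Fo Fm Go Gm phi k (replicate k E)"
proof -
  obtain j where j: "k = Suc j" using assms(2) by (cases k) auto
  have "\<forall>i\<le>j. iso_at Fo Go phi (amb C (E # replicate i E))"
  proof (intro allI impI)
    fix i assume "i \<le> j"
    then have "Suc i \<le> n" using assms(3) j by simp
    then have "iso_at Fo Go phi (copow C E (Suc i))" using assms(1) by blast
    then show "iso_at Fo Go phi (amb C (E # replicate i E))" by (rule iso_at_amb_of_copow)
  qed
  then show ?thesis using crE_iso_of_iso[OF E] cr_nat_iso_iff_crE j by simp
qed

text \<open>Above degree \<open>n\<close> the cross effects vanish, so there \<open>phiE j\<close> is trivially an isomorphism.\<close>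
lemma crE_iso_at_E:
  assumes "\<forall>k. 1 \<le> k \<and> k \<le> n \<longrightarrow> cr_nat_iso C Fo Fm Go Gm phi k (replicate k E)"
  shows "iso_at (KF j) (KG j) (phiE j) E"
proof (cases "j < n")
  case True
  then show ?thesis using assms[rule_format, of "Suc j"] cr_nat_iso_iff_crE[of j] by simp
next
  case False
  then have "n \<le> j" by simp
  then show ?thesis
    by (intro iso_at_phiE_of_trivial[OF E]
        crE_trivial_mono[OF F E crE_trivial_of_polynomial[OF F F_reduced F_poly E] _ E]
        crE_trivial_mono[OF G E crE_trivial_of_polynomial[OF G G_reduced G_poly E] _ E])
qed

lemma crE_iso_at_copow:
  assumes "\<forall>k. 1 \<le> k \<and> k \<le> n \<longrightarrow> cr_nat_iso C Fo Fm Go Gm phi k (replicate k E)"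
  shows "iso_at (KF j) (KG j) (phiE j) (copow C E m)"
proof (induction m arbitrary: j)
  case 0
  show ?case
    using reduced_crE[OF F F_reduced E] reduced_crE[OF G G_reduced E]
    by (intro iso_at_phiE_of_trivial) (simp_all add: zero_ob reduced_def)
next
  case (Suc m)
  have "phiE j (cCop C (copow C E m) E) \<in> iso (cr2_obj C (KF j) (snd (crE C E Fo Fm j)) E (copow C E m))
     (cr2_obj C (KG j) (snd (crE C E Go Gm j)) E (copow C E m))"
    using Suc.IH[of "Suc j"] by (simp add: amb_Cons_Cons)
  then show ?case
    using iso_of_iso_cr2[OF ab_functor_KF ab_functor_KG reduced_crE[OF G G_reduced E] nat_trans_phiE
        copow_ob E Suc.IH crE_iso_at_E[OF assms]] by simp
qed

lemma iso_of_iso_at_copow: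
  assumes "\<forall>m. iso_at Fo Go phi (copow C E m)" "P \<in> cOb C"
  shows "iso_at Fo Go phi P"
proof -
  obtain k s r where "s \<in> HomC C P (copow C E k)" "r \<in> HomC C (copow C E k) P" "cCmp C r s = cId C P"
    using generator assms(2) unfolding is_iso_obj_def by blast
  then show ?thesis using iso_of_retract[OF F G phi] assms(1) by blast
qed

lemma iso_of_cr_iso:
  assumes "\<forall>k. 1 \<le> k \<and> k \<le> n \<longrightarrow> cr_nat_iso C Fo Fm Go Gm phi k (replicate k E)" "P \<in> cOb C"
  shows "iso_at Fo Go phi P"
  using crE_iso_at_copow[OF assms(1), where j=0] by (intro iso_of_iso_at_copow assms(2)) simp

end

theorem proposition1p17:
  fixes C :: "('o,'m) pcat" and E :: 'o and n :: nat
    and Fo :: "'o \<Rightarrow> 'g monoid" and Fm :: "'m \<Rightarrow> 'g \<Rightarrow> 'g"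
    and Go :: "'o \<Rightarrow> 'h monoid" and Gm :: "'m \<Rightarrow> 'h \<Rightarrow> 'h"
    and phi :: "'o \<Rightarrow> 'g \<Rightarrow> 'h"
  assumes C: "pointed_cat_fin_coprod C"
    and E: "E \<in> cOb C"
    and gen: "\<forall>P\<in>cOb C. \<exists>k. is_iso_obj C P (copow C E k)"
    and F: "ab_functor C Fo Fm" and Fred: "reduced C Fo" and Fpol: "polynomial_deg_le C Fo Fm n"
    and G: "ab_functor C Go Gm" and Gred: "reduced C Go" and Gpol: "polynomial_deg_le C Go Gm n"
    and phi: "nat_trans C Fo Fm Go Gm phi"
  shows "((\<forall>P\<in>cOb C. phi P \<in> iso (Fo P) (Go P))
            \<longleftrightarrow> (\<forall>k\<le>n. phi (copow C E k) \<in> iso (Fo (copow C E k)) (Go (copow C E k))))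
       \<and> ((\<forall>P\<in>cOb C. phi P \<in> iso (Fo P) (Go P))
            \<longleftrightarrow> phi (copow C E n) \<in> iso (Fo (copow C E n)) (Go (copow C E n)))
       \<and> ((\<forall>P\<in>cOb C. phi P \<in> iso (Fo P) (Go P))
            \<longleftrightarrow> (\<forall>k. 1 \<le> k \<and> k \<le> n \<longrightarrow> cr_nat_iso C Fo Fm Go Gm phi k (replicate k E)))"
proof -
  interpret polynomial_nat_trans C E n Fo Fm Go Gm phi
    using C E gen F Fred Fpol G Gred Gpol phi
    by (simp add: polynomial_nat_trans_def polynomial_nat_trans_axioms_def fin_coprod_cat_def)
  have iso_cr: "(\<forall>k\<le>n. iso_at Fo Go phi (copow C E k)) \<Longrightarrow>
      \<forall>k. 1 \<le> k \<and> k \<le> n \<longrightarrow> cr_nat_iso C Fo Fm Go Gm phi k (replicate k E)"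
    using cr_iso_of_iso_at_copow by blast
  show ?thesis
    using iso_cr iso_of_cr_iso iso_at_copow_le copow_ob by blast
qed

end
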